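(* The operator $J$ with domain $\mathcal F(\Gamma)$, viewed as a symmetric operator in $\ell^2(\Gamma)$, has defect indices not greater than $1$; i.e. for every nonreal $z$, the space of $v\in\ell^2(\Gamma)$ with $Jv=zv$ has dimension at most $1$.
   Context: Let $\Gamma$ be an infinite connected tree whose vertices are arranged in levels $\ell(x)\in\{0,1,2,\dots\}$: every vertex $x$ is adjacent to exactly one vertex $x'$ with $\ell(x')=\ell(x)+1$; for $\ell(x)\ge 1$ the set $N_x=\{y:\ y'=x\}$ of neighbours of $x$ on level $\ell(x)-1$ is finite and nonempty; $N_x=\emptyset$ if $\ell(x)=0$; there are no other edges. Fix $\lambda_x>0$, $\beta_x\in\mathbb R$ for $x\in\Gamma$. The Jacobi matrix $J$ acts on functions $v:\Gamma\to\mathbb C$ by $(Jv)(x)=\lambda_x v(x')+\beta_x v(x)+\sum_{y\in N_x}\lambda_y v(y)$. $\mathcal F(\Gamma)$ denotes the finitely supported functions on $\Gamma$; $\ell^2(\Gamma)$ has inner product $(u,v)=\sum_{x}u(x)\overline{v(x)}$, and $J$ with domain $\mathcal F(\Gamma)$ is a symmetric operator in $\ell^2(\Gamma)$. *)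

theory Defs
  imports "HOL-Analysis.Analysis"
begin

text \<open>The vertex set of the tree is the whole type 'a. lev x is the level of x,
  par x is the unique neighbour x' of x on level lev x + 1.
  The neighbours of x on level lev x - 1 are the y with par y = x.\<close>

definition lower_nbrs :: "('a \<Rightarrow> 'a) \<Rightarrow> 'a \<Rightarrow> 'a set" where
  "lower_nbrs par x = {y. par y = x}"

definition level_tree :: "('a \<Rightarrow> nat) \<Rightarrow> ('a \<Rightarrow> 'a) \<Rightarrow> bool" where
  "level_tree lev par \<longleftrightarrow>
     infinite (UNIV :: 'a set) \<and>
     (\<forall>x. lev (par x) = lev x + 1) \<and>
     (\<forall>x. lev x \<ge> 1 \<longrightarrow> finite (lower_nbrs par x) \<and> lower_nbrs par x \<noteq> {}) \<and>
     (\<forall>x. lev x = 0 \<longrightarrow> lower_nbrs par x = {}) \<and>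
     (\<forall>x y. \<exists>m n. (par ^^ m) x = (par ^^ n) y)"

definition jacobi :: "('a \<Rightarrow> 'a) \<Rightarrow> ('a \<Rightarrow> real) \<Rightarrow> ('a \<Rightarrow> real)
    \<Rightarrow> ('a \<Rightarrow> complex) \<Rightarrow> 'a \<Rightarrow> complex" where
  "jacobi par lam bet v x =
     complex_of_real (lam x) * v (par x) + complex_of_real (bet x) * v x
     + (\<Sum>y\<in>lower_nbrs par x. complex_of_real (lam y) * v y)"

definition ell2 :: "('a \<Rightarrow> complex) set" where
  "ell2 = {v. (\<lambda>x. (cmod (v x))\<^sup>2) summable_on UNIV}"

definition eigen_space :: "('a \<Rightarrow> 'a) \<Rightarrow> ('a \<Rightarrow> real) \<Rightarrow> ('a \<Rightarrow> real)
    \<Rightarrow> complex \<Rightarrow> ('a \<Rightarrow> complex) set" where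
  "eigen_space par lam bet z = {v \<in> ell2. jacobi par lam bet v = (\<lambda>x. z * v x)}"

end

theory Submission
  imports Defs
begin

text \<open>If \<open>Jv = zv\<close>, summing \<open>Im (z v(y) conj v(y))\<close> over the finite subtree hanging below a
  vertex \<open>x\<close> makes all internal edges cancel, leaving
  \<open>Im z \<cdot> \<Sum>\<^sub>y |v(y)|\<^sup>2 = \<lambda>\<^sub>x Im (v(x') conj v(x))\<close>. Hence for nonreal \<open>z\<close>, \<open>v(x') = 0\<close> forces \<open>v\<close> to
  vanish on the subtree below \<open>x\<close>, and the eigenvalue equation at \<open>x\<close> then gives \<open>v(x') = 0\<close>
  when \<open>v(x) = 0\<close>. As the tree is connected, a solution vanishing at one vertex vanishes
  everywhere, so a solution is determined by its value at any fixed vertex.\<close>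

lemma level_tree_finite_lower_nbrs:
  assumes "level_tree lev par"
  shows "finite (lower_nbrs par x)"
  using assms unfolding level_tree_def by (cases "lev x = 0") auto

lemma level_tree_lev_lower_nbrs:
  assumes "level_tree lev par" and "y \<in> lower_nbrs par x"
  shows "lev y < lev x"
  using assms unfolding level_tree_def lower_nbrs_def by auto

lemma jacobi_diff_scaleC:
  "jacobi par lam bet (\<lambda>x. v x - c * u x) x = jacobi par lam bet v x - c * jacobi par lam bet u x"
  unfolding jacobi_def by (simp add: algebra_simps sum_subtractf sum_distrib_left)

lemma Im_mult_cnj_self: "Im (z * w * cnj w) = Im z * (cmod w)\<^sup>2"
proof -
  have "Im (z * w * cnj w) = Im z * ((Re w)\<^sup>2 + (Im w)\<^sup>2)"
    by (simp add: algebra_simps power2_eq_square)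
  then show ?thesis by (simp add: cmod_power2)
qed

lemma Im_jacobi_mult_cnj:
  "Im (jacobi par lam bet v x * cnj (v x)) =
     lam x * Im (v (par x) * cnj (v x)) + (\<Sum>y\<in>lower_nbrs par x. lam y * Im (v y * cnj (v x)))"
proof -
  have "Im (v x * cnj (v x)) = 0"
    by (simp add: complex_norm_square[symmetric])
  then show ?thesis
    unfolding jacobi_def by (simp add: distrib_right sum_distrib_right mult.assoc Im_sum)
qed

text \<open>The witness \<open>S\<close> is the sum of \<open>|v|\<^sup>2\<close> over the strict descendants of \<open>x\<close>.\<close>

lemma eigen_subtree_flux:
  assumes tree: "level_tree lev par"
    and eigen: "jacobi par lam bet v = (\<lambda>x. z * v x)"
  shows "\<exists>S\<ge>0. Im z * ((cmod (v x))\<^sup>2 + S) = lam x * Im (v (par x) * cnj (v x))"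
proof (induction "lev x" arbitrary: x rule: less_induct)
  case less
  let ?C = "lower_nbrs par x"
  have "\<forall>c\<in>?C. \<exists>S\<ge>0. Im z * ((cmod (v c))\<^sup>2 + S) = lam c * Im (v (par c) * cnj (v c))"
    using less level_tree_lev_lower_nbrs[OF tree] by blast
  then obtain Sc where Sc: "\<And>c. c \<in> ?C \<Longrightarrow> Sc c \<ge> 0"
    and flux_c: "\<And>c. c \<in> ?C \<Longrightarrow>
      Im z * ((cmod (v c))\<^sup>2 + Sc c) = lam c * Im (v (par c) * cnj (v c))"
    by metis
  have flux_c': "Im z * ((cmod (v c))\<^sup>2 + Sc c) = - (lam c * Im (v c * cnj (v x)))"
    if "c \<in> ?C" for c
  proof -
    have "par c = x" using that unfolding lower_nbrs_def by simp
    moreover have "Im (v x * cnj (v c)) = - Im (v c * cnj (v x))" by simp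
    ultimately show ?thesis using flux_c[OF that] by (simp add: algebra_simps)
  qed
  define S where "S = (\<Sum>c\<in>?C. (cmod (v c))\<^sup>2 + Sc c)"
  have "S \<ge> 0" unfolding S_def by (rule sum_nonneg) (use Sc in auto)
  have "Im z * S = - (\<Sum>c\<in>?C. lam c * Im (v c * cnj (v x)))"
    unfolding S_def sum_distrib_left using flux_c' by (simp add: sum_negf)
  moreover have "Im z * (cmod (v x))\<^sup>2 =
      lam x * Im (v (par x) * cnj (v x)) + (\<Sum>c\<in>?C. lam c * Im (v c * cnj (v x)))"
    using Im_jacobi_mult_cnj[of par lam bet v x] fun_cong[OF eigen, of x]
    by (simp only: Im_mult_cnj_self)
  ultimately have "Im z * ((cmod (v x))\<^sup>2 + S) = lam x * Im (v (par x) * cnj (v x))"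
    by (simp add: distrib_left)
  with \<open>S \<ge> 0\<close> show ?case by blast
qed

lemma eigen_vanish_below:
  assumes tree: "level_tree lev par" and "Im z \<noteq> 0"
    and eigen: "jacobi par lam bet v = (\<lambda>x. z * v x)"
    and "v x = 0" and "(par ^^ k) y = x"
  shows "v y = 0"
  using assms(5)
proof (induction k arbitrary: y)
  case 0
  with \<open>v x = 0\<close> show ?case by simp
next
  case (Suc k)
  then have "v (par y) = 0"
    by (simp add: funpow_Suc_right del: funpow.simps)
  obtain S where "S \<ge> 0" and "Im z * ((cmod (v y))\<^sup>2 + S) = lam y * Im (v (par y) * cnj (v y))"
    using eigen_subtree_flux[OF tree eigen] by blast
  with \<open>v (par y) = 0\<close> \<open>Im z \<noteq> 0\<close> have "(cmod (v y))\<^sup>2 + S = 0" by simp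
  with \<open>S \<ge> 0\<close> have "(cmod (v y))\<^sup>2 = 0" by (smt (verit) zero_le_power2)
  then show ?case by simp
qed

lemma eigen_vanish_parent:
  assumes tree: "level_tree lev par" and "\<forall>x. lam x > 0" and "Im z \<noteq> 0"
    and eigen: "jacobi par lam bet v = (\<lambda>x. z * v x)"
    and "v x = 0"
  shows "v (par x) = 0"
proof -
  have "v c = 0" if "c \<in> lower_nbrs par x" for c
    using eigen_vanish_below[OF tree \<open>Im z \<noteq> 0\<close> eigen \<open>v x = 0\<close>, of 1 c] that
    unfolding lower_nbrs_def by simp
  then have "complex_of_real (lam x) * v (par x) = 0"
    using fun_cong[OF eigen, of x] \<open>v x = 0\<close> unfolding jacobi_def by simp
  with \<open>\<forall>x. lam x > 0\<close> show ?thesis by (metis less_irrefl mult_eq_0_iff of_real_eq_0_iff)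
qed

lemma eigen_vanish_everywhere:
  assumes tree: "level_tree lev par" and "\<forall>x. lam x > 0" and "Im z \<noteq> 0"
    and eigen: "jacobi par lam bet v = (\<lambda>x. z * v x)"
    and "v x = 0"
  shows "v y = 0"
proof -
  have ancestors: "v ((par ^^ n) x) = 0" for n
    by (induction n) (auto simp: \<open>v x = 0\<close> intro: eigen_vanish_parent[OF assms(1-4)])
  obtain m n where "(par ^^ m) y = (par ^^ n) x"
    using tree unfolding level_tree_def by blast
  then show ?thesis
    using eigen_vanish_below[OF tree \<open>Im z \<noteq> 0\<close> eigen ancestors[of n]] by blast
qed

theorem proposition2:
  fixes lev :: "'a \<Rightarrow> nat" and par :: "'a \<Rightarrow> 'a"
    and lam bet :: "'a \<Rightarrow> real" and z :: complex
  assumes "level_tree lev par"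
    and "\<forall>x. lam x > 0"
    and "Im z \<noteq> 0"
  shows "\<exists>u :: 'a \<Rightarrow> complex. \<forall>v \<in> eigen_space par lam bet z.
           \<exists>c :: complex. v = (\<lambda>x. c * u x)"
proof (cases "\<exists>u\<in>eigen_space par lam bet z. \<exists>x. u x \<noteq> 0")
  case False
  then show ?thesis by (intro exI[of _ "\<lambda>_. 0"]) auto
next
  case True
  then obtain u x0 where u: "u \<in> eigen_space par lam bet z" and "u x0 \<noteq> 0" by blast
  show ?thesis
  proof (intro exI[of _ u] ballI)
    fix v assume v: "v \<in> eigen_space par lam bet z"
    define c where "c = v x0 / u x0"
    have "jacobi par lam bet (\<lambda>x. v x - c * u x) = (\<lambda>x. z * (v x - c * u x))"
      using u v unfolding eigen_space_def
      by (auto simp: fun_eq_iff jacobi_diff_scaleC algebra_simps)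
    moreover have "v x0 - c * u x0 = 0" using \<open>u x0 \<noteq> 0\<close> by (simp add: c_def)
    ultimately have "v y - c * u y = 0" for y
      using eigen_vanish_everywhere[OF assms, of bet "\<lambda>x. v x - c * u x" x0] by blast
    then show "\<exists>c. v = (\<lambda>x. c * u x)" by (auto simp: fun_eq_iff)
  qed
qed

end
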